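(* Let $X$ be a real Hilbert space of dimension $d$ with unit ball $\mathcal B$, $V\subseteq X$ a subspace, $\Omega\subseteq X$ a symmetric convex set, and $R>0$, and suppose $\mathcal B/V\subseteq R(\Omega\cap\mathcal B)/V$. Then there is a linear map $T:X\to X$ with $\|T\|_{op}\le dR$ such that for all $x\in X$: $x-Tx\in V$ and $Tx\in dR|x|(\Omega\cap\mathcal B)$.
   Context: For $A\subseteq X$, $A/V=\{a+V:a\in A\}\subseteq X/V$; thus $\mathcal B/V\subseteq R(\Omega\cap\mathcal B)/V$ means every $b\in\mathcal B$ differs from some element of $R(\Omega\cap\mathcal B)$ by an element of $V$. *)

theory Defs
  imports "HOL-Analysis.Analysis"
begin

end

theory Submission
  imports Defs
begin

text \<open>Pick for every basis vector \<open>b\<close> a point \<open>w b\<close> of \<open>K = \<Omega> \<inter> \<B>\<close> with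
  \<open>b - R w b \<in> V\<close>, and extend \<open>b \<mapsto> R w b\<close> linearly. Since \<open>K\<close> is convex, symmetric and
  contains \<open>0\<close>, it is absolutely convex, so \<open>\<Sum>\<^sub>b c\<^sub>b w b \<in> K\<close> whenever \<open>\<Sum>\<^sub>b \<bar>c\<^sub>b\<bar> \<le> 1\<close>;
  the \<open>\<ell>\<^sub>1\<close>-norm of the coordinates of \<open>x\<close> is at most \<open>d \<parallel>x\<parallel>\<close>, whence \<open>T x \<in> d R \<parallel>x\<parallel> K\<close>.\<close>

lemma convex_symmetric_contains_0:
  fixes K :: "'a::real_vector set"
  assumes "convex K" "\<forall>x\<in>K. - x \<in> K" "x \<in> K"
  shows "0 \<in> K"
proof -
  have "(1/2) *\<^sub>R x + (1 - 1/2) *\<^sub>R (- x) \<in> K"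
    using assms by (intro convexD) auto
  then show ?thesis
    by (simp add: algebra_simps)
qed

lemma convex_scaleR_mem:
  fixes K :: "'a::real_vector set"
  assumes "convex K" "0 \<in> K" "z \<in> K" "0 \<le> c" "c \<le> 1"
  shows "c *\<^sub>R z \<in> K"
proof -
  have "c *\<^sub>R z + (1 - c) *\<^sub>R 0 \<in> K"
    using assms by (intro convexD) auto
  then show ?thesis
    by simp
qed

lemma absolutely_convex_sum:
  fixes K :: "'a::real_vector set"
  assumes "convex K" "\<forall>x\<in>K. - x \<in> K" "0 \<in> K"
    and "finite I" "\<And>i. i \<in> I \<Longrightarrow> v i \<in> K" "(\<Sum>i\<in>I. \<bar>c i\<bar>) \<le> 1"
  shows "(\<Sum>i\<in>I. c i *\<^sub>R v i) \<in> K"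
proof (cases "(\<Sum>i\<in>I. \<bar>c i\<bar>) = 0")
  case True
  then have "\<forall>i\<in>I. c i = 0"
    using \<open>finite I\<close> by (simp add: sum_nonneg_eq_0_iff)
  then show ?thesis
    using \<open>0 \<in> K\<close> by simp
next
  case False
  define s where "s = (\<Sum>i\<in>I. \<bar>c i\<bar>)"
  have s: "0 < s" "s \<le> 1"
    using False assms(6) by (auto simp: s_def intro: sum_nonneg order.not_eq_order_implies_strict)
  define u where "u = (\<Sum>i\<in>I. (\<bar>c i\<bar> / s) *\<^sub>R (sgn (c i) *\<^sub>R v i))"
  have "u \<in> K"
    unfolding u_def
  proof (rule convex_sum[OF \<open>finite I\<close> \<open>convex K\<close>])
    show "(\<Sum>i\<in>I. \<bar>c i\<bar> / s) = 1"
      using s by (simp add: s_def flip: sum_divide_distrib)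
    show "sgn (c i) *\<^sub>R v i \<in> K" if "i \<in> I" for i
      using assms(2,3) assms(5)[OF that] by (simp add: sgn_if)
  qed (use s in auto)
  moreover have "(\<Sum>i\<in>I. c i *\<^sub>R v i) = s *\<^sub>R u"
    using s by (simp add: u_def scaleR_sum_right abs_mult_sgn)
  ultimately show ?thesis
    using convex_scaleR_mem[OF \<open>convex K\<close> \<open>0 \<in> K\<close>] s by simp
qed

lemma sum_abs_inner_Basis_le:
  fixes x :: "'a::euclidean_space"
  shows "(\<Sum>b\<in>Basis. \<bar>x \<bullet> b\<bar>) \<le> real DIM('a) * norm x"
proof -
  have "(\<Sum>b\<in>Basis. \<bar>x \<bullet> b\<bar>) \<le> (\<Sum>b\<in>(Basis::'a set). norm x)"
    by (intro sum_mono) (simp add: Basis_le_norm)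
  then show ?thesis
    by simp
qed

lemma linear_Basis_extension: "linear (\<lambda>x. \<Sum>b\<in>Basis. (x \<bullet> b) *\<^sub>R f b)"
  by (intro linearI) (simp_all add: inner_add_left algebra_simps sum.distrib scaleR_sum_right)

lemma Basis_extension_diff_mem_subspace:
  fixes V :: "'a::euclidean_space set"
  assumes "subspace V" "\<And>b. b \<in> Basis \<Longrightarrow> b - f b \<in> V"
  shows "x - (\<Sum>b\<in>Basis. (x \<bullet> b) *\<^sub>R f b) \<in> V"
proof -
  have "x - (\<Sum>b\<in>Basis. (x \<bullet> b) *\<^sub>R f b) = (\<Sum>b\<in>Basis. (x \<bullet> b) *\<^sub>R (b - f b))"
    by (simp add: scaleR_diff_right sum_subtractf euclidean_representation)
  also have "\<dots> \<in> V"
    using assms by (intro subspace_sum subspace_scale) auto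
  finally show ?thesis .
qed

lemma Basis_extension_mem_scaled_absolutely_convex:
  fixes x :: "'a::euclidean_space" and K :: "'b::real_vector set"
  assumes "convex K" "\<forall>x\<in>K. - x \<in> K" "0 \<in> K" "\<And>b. b \<in> Basis \<Longrightarrow> f b \<in> K"
  shows "(\<Sum>b\<in>Basis. (x \<bullet> b) *\<^sub>R f b) \<in> (\<lambda>z. (real DIM('a) * norm x) *\<^sub>R z) ` K"
proof
  define t where "t = real DIM('a) * norm x"
  show "(\<Sum>b\<in>Basis. ((x \<bullet> b) / t) *\<^sub>R f b) \<in> K"
  proof (rule absolutely_convex_sum[OF assms(1-3) finite_Basis assms(4)])
    have "(\<Sum>b\<in>Basis. \<bar>x \<bullet> b\<bar> / t) \<le> 1" if "t \<noteq> 0"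
      using that sum_abs_inner_Basis_le[of x]
      by (simp add: t_def field_simps flip: sum_divide_distrib)
    then show "(\<Sum>b\<in>Basis. \<bar>(x \<bullet> b) / t\<bar>) \<le> 1"
      by (cases "t = 0") (simp_all add: t_def)
  qed
  \<comment> \<open>for \<open>x = 0\<close> both sides vanish, because the coordinates do and \<open>_ / 0 = 0\<close>\<close>
  have "t * ((x \<bullet> b) / t) = x \<bullet> b" for b
    by (cases "x = 0") (simp_all add: t_def)
  then show "(\<Sum>b\<in>Basis. (x \<bullet> b) *\<^sub>R f b) = t *\<^sub>R (\<Sum>b\<in>Basis. ((x \<bullet> b) / t) *\<^sub>R f b)"
    by (simp add: scaleR_sum_right t_def)
qed

lemma onorm_le_of_mem_scaled_cball:
  fixes T :: "'a::{real_normed_vector, perfect_space} \<Rightarrow> 'b::real_normed_vector"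
  assumes "\<And>x. T x \<in> (\<lambda>z. (c * norm x) *\<^sub>R z) ` (S \<inter> cball 0 1)" "0 \<le> c"
  shows "onorm T \<le> c"
proof (rule onorm_le)
  fix x
  obtain z where "norm z \<le> 1" "T x = (c * norm x) *\<^sub>R z"
    using assms(1)[of x] by auto
  then show "norm (T x) \<le> c * norm x"
    using assms(2) by (simp add: mult_left_le)
qed

theorem lemma8p3:
  fixes V \<Omega> :: "'a::euclidean_space set" and R :: real
  assumes "subspace V"
    and "convex \<Omega>" and "\<forall>x\<in>\<Omega>. - x \<in> \<Omega>"
    and "R > 0"
    and "\<forall>b\<in>cball 0 1. \<exists>y\<in>(\<lambda>z. R *\<^sub>R z) ` (\<Omega> \<inter> cball 0 1). b - y \<in> V"
  shows "\<exists>T. linear T \<and> onorm T \<le> real DIM('a) * R \<and>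
           (\<forall>x. x - T x \<in> V \<and>
                T x \<in> (\<lambda>z. (real DIM('a) * R * norm x) *\<^sub>R z) ` (\<Omega> \<inter> cball 0 1))"
proof -
  define K where "K = \<Omega> \<inter> cball 0 1"
  have K: "convex K" "\<forall>x\<in>K. - x \<in> K"
    using assms(2,3) by (auto simp: K_def convex_Int)
  have "\<forall>b\<in>cball 0 1. \<exists>w. w \<in> K \<and> b - R *\<^sub>R w \<in> V"
    using assms(5) unfolding K_def by blast
  then obtain w where w: "\<And>b. b \<in> cball 0 1 \<Longrightarrow> w b \<in> K \<and> b - R *\<^sub>R w b \<in> V"
    by metis
  then have "0 \<in> K"
    using convex_symmetric_contains_0[OF K] by (metis centre_in_cball zero_le_one)
  define T where "T x = (\<Sum>b\<in>Basis. (x \<bullet> b) *\<^sub>R (R *\<^sub>R w b))" for x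
  have img: "T x \<in> (\<lambda>z. (real DIM('a) * R * norm x) *\<^sub>R z) ` K" for x
  proof -
    obtain z where z: "z \<in> K" "(\<Sum>b\<in>Basis. (x \<bullet> b) *\<^sub>R w b) = (real DIM('a) * norm x) *\<^sub>R z"
      using Basis_extension_mem_scaled_absolutely_convex[OF K \<open>0 \<in> K\<close>, of w x] w
      by (auto simp: norm_Basis)
    have "T x = R *\<^sub>R (\<Sum>b\<in>Basis. (x \<bullet> b) *\<^sub>R w b)"
      by (simp add: T_def scaleR_sum_right mult.commute)
    also have "\<dots> = (real DIM('a) * R * norm x) *\<^sub>R z"
      by (simp add: z(2) ac_simps)
    finally show ?thesis
      using z(1) by blast
  qed
  have "onorm T \<le> real DIM('a) * R"
    using img assms(4) unfolding K_def by (intro onorm_le_of_mem_scaled_cball) auto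
  moreover have "x - T x \<in> V" for x
    unfolding T_def using w by (intro Basis_extension_diff_mem_subspace[OF assms(1)]) (auto simp: norm_Basis)
  ultimately show ?thesis
    using img linear_Basis_extension[of "\<lambda>b. R *\<^sub>R w b"] unfolding K_def T_def by auto
qed

end
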